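(* Let $L$ be a multisorted algebra in the positive existential signature satisfying axioms (1), (2), (3), (8), and let $F$ be a prime filter on sort $n$ of $L$. Let $F_1,\dots,F_n$ be distinct symbols and $W=\{F_1,\dots,F_n\}$. Define $\varphi\colon L\to A(W)$ on each sort $k$ by: for each substitution $\alpha\colon k\to n$, $\alpha^{\mathrm{tuple}}(F_1,\dots,F_n)\in\varphi(r)$ if and only if $\alpha(r)\in F$. Then $\varphi$ is an almost morphism.
   Context: Signature. There is a sort $n$ for each $n\ge0$. For every function $\alpha\colon\{1,\dots,n\}\to\{1,\dots,k\}$ there is a unary function symbol ("substitution") $\alpha\colon n\to k$ (argument of sort $n$, value of sort $k$). Each sort has $0,1,\vee,\wedge$; for each $n$ there is $\exists\colon n+1\to n$ (positive existential signature). For $\alpha\colon k\to n$, $\beta\colon n\to m$, $\beta\circ\alpha$ is the substitution symbol of the composite function. The associated cylindrification of $\exists\colon n+1\to n$ is $c\colon n\to n+1$, $c(i)=i$. For a set $W$: $\alpha^{\mathrm{tuple}}(x_1,\dots,x_k)=(x_{\alpha(1)},\dots,x_{\alpha(n)})$, $\alpha^{\mathrm{relation}}(r)=\{\bar x\in W^k:\alpha^{\mathrm{tuple}}(\bar x)\in r\}$. The positive existential algebra $A(W)$ interprets sort $n$ as $\mathcal P(W^n)$, $\alpha$ as $\alpha^{\mathrm{relation}}$, $0,1,\vee,\wedge$ as $\emptyset,W^n,\cup,\cap$, and $\exists(r)=\{\bar x:\exists y\,(\bar x,y)\in r\}$. Since the $F_i$ are distinct, each $k$-tuple from $W$ is $\alpha^{\mathrm{tuple}}(F_1,\dots,F_n)$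 for exactly one $\alpha\colon k\to n$. An almost morphism $\varphi\colon L\to A(W)$ is a sort-preserving family of maps commuting with all substitutions and with $0,1,\vee,\wedge$, and satisfying $\exists(\varphi(r))\subseteq\varphi(\exists(r))$ for all $r$. Axioms: (1) each sort is a bounded distributive lattice; (2) substitutions preserve $0,1,\vee,\wedge$; (3) $(\beta\circ\alpha)(r)=\beta(\alpha(r))$; (8) $r\le c(\exists(r))$ for all $r$ of sort $n+1$ (where $x\le y$ means $x=x\wedge y$). A prime filter is a proper, nonempty, upward-closed, $\wedge$-closed subset of a sort with $x\vee y\in F\Rightarrow x\in F$ or $y\in F$. *)

theory Defs
  imports Main
begin

text \<open>A function alpha from {1..n} to {1..k}, represented extensionally
  (value 0 outside {1..n}), so that substitution symbols correspond exactly
  to such functions.\<close>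
definition sfun :: "nat \<Rightarrow> nat \<Rightarrow> (nat \<Rightarrow> nat) \<Rightarrow> bool" where
  "sfun n k \<alpha> \<longleftrightarrow> (\<forall>i\<in>{1..n}. \<alpha> i \<in> {1..k}) \<and> (\<forall>i. i \<notin> {1..n} \<longrightarrow> \<alpha> i = 0)"

definition cyl :: "nat \<Rightarrow> nat \<Rightarrow> nat" where
  "cyl n i = (if i \<in> {1..n} then i else 0)"

text \<open>A multisorted algebra in the positive existential signature.
  pe_sub A n k alpha : sort n -> sort k  (alpha a function {1..n} -> {1..k});
  pe_ex A n : sort n+1 -> sort n.\<close>
record 'a pe_alg =
  pe_car  :: "nat \<Rightarrow> 'a set"
  pe_sub  :: "nat \<Rightarrow> nat \<Rightarrow> (nat \<Rightarrow> nat) \<Rightarrow> 'a \<Rightarrow> 'a"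
  pe_bot  :: "nat \<Rightarrow> 'a"
  pe_top  :: "nat \<Rightarrow> 'a"
  pe_join :: "nat \<Rightarrow> 'a \<Rightarrow> 'a \<Rightarrow> 'a"
  pe_meet :: "nat \<Rightarrow> 'a \<Rightarrow> 'a \<Rightarrow> 'a"
  pe_ex   :: "nat \<Rightarrow> 'a \<Rightarrow> 'a"

definition pe_algebra :: "'a pe_alg \<Rightarrow> bool" where
  "pe_algebra L \<longleftrightarrow>
     (\<forall>n k \<alpha> r. sfun n k \<alpha> \<longrightarrow> r \<in> pe_car L n \<longrightarrow> pe_sub L n k \<alpha> r \<in> pe_car L k) \<and>
     (\<forall>n. pe_bot L n \<in> pe_car L n \<and> pe_top L n \<in> pe_car L n) \<and>
     (\<forall>n x y. x \<in> pe_car L n \<longrightarrow> y \<in> pe_car L n \<longrightarrow>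
        pe_join L n x y \<in> pe_car L n \<and> pe_meet L n x y \<in> pe_car L n) \<and>
     (\<forall>n r. r \<in> pe_car L (Suc n) \<longrightarrow> pe_ex L n r \<in> pe_car L n)"

definition ax1 :: "'a pe_alg \<Rightarrow> bool" where
  "ax1 L \<longleftrightarrow> (\<forall>n. \<forall>x\<in>pe_car L n. \<forall>y\<in>pe_car L n. \<forall>z\<in>pe_car L n.
     pe_join L n x (pe_join L n y z) = pe_join L n (pe_join L n x y) z \<and>
     pe_meet L n x (pe_meet L n y z) = pe_meet L n (pe_meet L n x y) z \<and>
     pe_join L n x y = pe_join L n y x \<and>
     pe_meet L n x y = pe_meet L n y x \<and>
     pe_join L n x (pe_meet L n x y) = x \<and>
     pe_meet L n x (pe_join L n x y) = x \<and>
     pe_meet L n x (pe_join L n y z) = pe_join L n (pe_meet L n x y) (pe_meet L n x z) \<and>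
     pe_join L n x (pe_bot L n) = x \<and>
     pe_meet L n x (pe_top L n) = x)"

definition ax2 :: "'a pe_alg \<Rightarrow> bool" where
  "ax2 L \<longleftrightarrow> (\<forall>n k \<alpha>. sfun n k \<alpha> \<longrightarrow>
     pe_sub L n k \<alpha> (pe_bot L n) = pe_bot L k \<and>
     pe_sub L n k \<alpha> (pe_top L n) = pe_top L k \<and>
     (\<forall>x\<in>pe_car L n. \<forall>y\<in>pe_car L n.
        pe_sub L n k \<alpha> (pe_join L n x y) = pe_join L k (pe_sub L n k \<alpha> x) (pe_sub L n k \<alpha> y) \<and>
        pe_sub L n k \<alpha> (pe_meet L n x y) = pe_meet L k (pe_sub L n k \<alpha> x) (pe_sub L n k \<alpha> y)))"

definition ax3 :: "'a pe_alg \<Rightarrow> bool" where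
  "ax3 L \<longleftrightarrow> (\<forall>k n m \<alpha> \<beta>. sfun k n \<alpha> \<longrightarrow> sfun n m \<beta> \<longrightarrow>
     (\<forall>r\<in>pe_car L k. pe_sub L k m (\<beta> \<circ> \<alpha>) r = pe_sub L n m \<beta> (pe_sub L k n \<alpha> r)))"

definition pe_le :: "'a pe_alg \<Rightarrow> nat \<Rightarrow> 'a \<Rightarrow> 'a \<Rightarrow> bool" where
  "pe_le L n x y \<longleftrightarrow> x = pe_meet L n x y"

definition ax8 :: "'a pe_alg \<Rightarrow> bool" where
  "ax8 L \<longleftrightarrow> (\<forall>n. \<forall>r\<in>pe_car L (Suc n).
     pe_le L (Suc n) r (pe_sub L n (Suc n) (cyl n) (pe_ex L n r)))"

definition prime_filter :: "'a pe_alg \<Rightarrow> nat \<Rightarrow> 'a set \<Rightarrow> bool" where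
  "prime_filter L n F \<longleftrightarrow>
     F \<subseteq> pe_car L n \<and> F \<noteq> pe_car L n \<and> F \<noteq> {} \<and>
     (\<forall>x\<in>F. \<forall>y\<in>pe_car L n. pe_le L n x y \<longrightarrow> y \<in> F) \<and>
     (\<forall>x\<in>F. \<forall>y\<in>F. pe_meet L n x y \<in> F) \<and>
     (\<forall>x\<in>pe_car L n. \<forall>y\<in>pe_car L n. pe_join L n x y \<in> F \<longrightarrow> x \<in> F \<or> y \<in> F)"

text \<open>The algebra A(W). Tuples in W^n are lists of length n (coordinate i is xs ! (i-1)).\<close>
definition tuples :: "'w set \<Rightarrow> nat \<Rightarrow> 'w list set" where
  "tuples W n = {xs. length xs = n \<and> set xs \<subseteq> W}"

definition tuple_sub :: "nat \<Rightarrow> (nat \<Rightarrow> nat) \<Rightarrow> 'w list \<Rightarrow> 'w list" where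
  "tuple_sub n \<alpha> xs = map (\<lambda>i. xs ! (\<alpha> i - 1)) [1..<Suc n]"

definition rel_sub :: "'w set \<Rightarrow> nat \<Rightarrow> nat \<Rightarrow> (nat \<Rightarrow> nat) \<Rightarrow> 'w list set \<Rightarrow> 'w list set" where
  "rel_sub W n k \<alpha> R = {xs \<in> tuples W k. tuple_sub n \<alpha> xs \<in> R}"

definition rel_ex :: "'w set \<Rightarrow> nat \<Rightarrow> 'w list set \<Rightarrow> 'w list set" where
  "rel_ex W n R = {xs \<in> tuples W n. \<exists>y\<in>W. xs @ [y] \<in> R}"

definition almost_morphism :: "'a pe_alg \<Rightarrow> 'w set \<Rightarrow> (nat \<Rightarrow> 'a \<Rightarrow> 'w list set) \<Rightarrow> bool" where
  "almost_morphism L W \<phi> \<longleftrightarrow>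
     (\<forall>n. \<forall>r\<in>pe_car L n. \<phi> n r \<subseteq> tuples W n) \<and>
     (\<forall>n k \<alpha>. sfun n k \<alpha> \<longrightarrow> (\<forall>r\<in>pe_car L n.
        \<phi> k (pe_sub L n k \<alpha> r) = rel_sub W n k \<alpha> (\<phi> n r))) \<and>
     (\<forall>n. \<phi> n (pe_bot L n) = {} \<and> \<phi> n (pe_top L n) = tuples W n) \<and>
     (\<forall>n. \<forall>x\<in>pe_car L n. \<forall>y\<in>pe_car L n.
        \<phi> n (pe_join L n x y) = \<phi> n x \<union> \<phi> n y \<and>
        \<phi> n (pe_meet L n x y) = \<phi> n x \<inter> \<phi> n y) \<and>
     (\<forall>n. \<forall>r\<in>pe_car L (Suc n). rel_ex W n (\<phi> (Suc n) r) \<subseteq> \<phi> n (pe_ex L n r))"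

definition phi_of :: "'a pe_alg \<Rightarrow> nat \<Rightarrow> 'a set \<Rightarrow> (nat \<Rightarrow> 'w) \<Rightarrow> nat \<Rightarrow> 'a \<Rightarrow> 'w list set" where
  "phi_of L n Fl Fs k r =
     {tuple_sub k \<alpha> (map Fs [1..<Suc n]) | \<alpha>. sfun k n \<alpha> \<and> pe_sub L k n \<alpha> r \<in> Fl}"

end

theory Submission
  imports Defs
begin

text \<open>Every k-tuple over W = {F_1, ..., F_n} is \<alpha>^tuple(F_1, ..., F_n) for exactly one
  \<alpha> : k \<rightarrow> n, so each clause of an almost morphism reduces to a statement about the prime
  filter F: compatibility with substitutions is axiom (3); preservation of 0, 1, \<or>, \<and> is
  axiom (2) together with primality of F. For \<exists>: if (x, y) = \<gamma>^tuple(F) with \<gamma>(r) \<in> F,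
  then x = (\<gamma> \<circ> c)^tuple(F), and axiom (8) gives \<gamma>(r) \<le> \<gamma>(c(\<exists> r)) = (\<gamma> \<circ> c)(\<exists> r),
  which therefore lies in F.\<close>

declare upt_Suc [simp del] \<comment> \<open>keeps \<open>[1..<Suc n]\<close> from being unfolded into an append\<close>

abbreviation generic_tuple :: "(nat \<Rightarrow> 'w) \<Rightarrow> nat \<Rightarrow> nat \<Rightarrow> (nat \<Rightarrow> nat) \<Rightarrow> 'w list" where
  "generic_tuple Fs n k \<alpha> \<equiv> tuple_sub k \<alpha> (map Fs [1..<Suc n])"

lemma length_tuple_sub [simp]: "length (tuple_sub k \<alpha> xs) = k"
  by (simp add: tuple_sub_def)

lemma nth_tuple_sub: "j < k \<Longrightarrow> tuple_sub k \<alpha> xs ! j = xs ! (\<alpha> (Suc j) - 1)"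
  unfolding tuple_sub_def by simp

lemma sfun_Suc_in_range: "sfun k n \<alpha> \<Longrightarrow> j < k \<Longrightarrow> \<alpha> (Suc j) \<in> {1..n}"
  unfolding sfun_def by auto

lemma nth_generic_tuple:
  assumes "sfun k n \<alpha>" "j < k"
  shows "generic_tuple Fs n k \<alpha> ! j = Fs (\<alpha> (Suc j))"
proof -
  from sfun_Suc_in_range[OF assms] obtain i where "\<alpha> (Suc j) = Suc i" "i < n"
    by (cases "\<alpha> (Suc j)") auto
  then show ?thesis using assms(2) by (simp add: nth_tuple_sub)
qed

lemma generic_tuple_inject:
  assumes "inj_on Fs {1..n}" "sfun k n \<alpha>" "sfun k n \<beta>"
  shows "generic_tuple Fs n k \<alpha> = generic_tuple Fs n k \<beta> \<longleftrightarrow> \<alpha> = \<beta>"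
proof
  assume eq: "generic_tuple Fs n k \<alpha> = generic_tuple Fs n k \<beta>"
  show "\<alpha> = \<beta>"
  proof
    fix i show "\<alpha> i = \<beta> i"
    proof (cases "i \<in> {1..k}")
      case True
      then obtain j where j: "i = Suc j" "j < k" by (cases i) auto
      have "Fs (\<alpha> i) = Fs (\<beta> i)"
        using eq nth_generic_tuple[OF assms(2) j(2)] nth_generic_tuple[OF assms(3) j(2)] j(1)
        by metis
      then show ?thesis
        using assms j sfun_Suc_in_range by (metis inj_onD)
    next
      case False
      then show ?thesis using assms(2,3) unfolding sfun_def by auto
    qed
  qed
qed simp

lemma generic_tuple_in_tuples:
  assumes "sfun k n \<alpha>"
  shows "generic_tuple Fs n k \<alpha> \<in> tuples (Fs ` {1..n}) k"
proof -
  have "generic_tuple Fs n k \<alpha> ! j \<in> Fs ` {1..n}" if "j < k" for j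
    unfolding nth_generic_tuple[OF assms that] using sfun_Suc_in_range[OF assms that] by (rule imageI)
  then show ?thesis
    unfolding tuples_def by (auto simp: in_set_conv_nth)
qed

lemma tuples_obtain_generic_tuple:
  assumes "xs \<in> tuples (Fs ` {1..n}) k"
  obtains \<alpha> where "sfun k n \<alpha>" "xs = generic_tuple Fs n k \<alpha>"
proof -
  have len: "length xs = k" and set: "set xs \<subseteq> Fs ` {1..n}"
    using assms by (auto simp: tuples_def)
  define \<alpha> where
    "\<alpha> i = (if i \<in> {1..k} then (SOME j. j \<in> {1..n} \<and> xs ! (i - 1) = Fs j) else 0)" for i
  have \<alpha>: "\<alpha> i \<in> {1..n} \<and> xs ! (i - 1) = Fs (\<alpha> i)" if "i \<in> {1..k}" for i
  proof -
    have "xs ! (i - 1) \<in> Fs ` {1..n}" using that len set by auto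
    then have "\<exists>j. j \<in> {1..n} \<and> xs ! (i - 1) = Fs j" by blast
    from someI_ex[OF this] show ?thesis unfolding \<alpha>_def using that by simp
  qed
  have sf: "sfun k n \<alpha>" unfolding sfun_def using \<alpha> by (auto simp: \<alpha>_def)
  have "xs = generic_tuple Fs n k \<alpha>"
  proof (rule nth_equalityI)
    fix j assume "j < length xs"
    then have "j < k" using len by simp
    then show "xs ! j = generic_tuple Fs n k \<alpha> ! j"
      using \<alpha>[of "Suc j"] nth_generic_tuple[OF sf, of j Fs] by simp
  qed (simp add: len)
  with sf that show ?thesis by blast
qed

lemma sfun_comp: "sfun m k \<beta> \<Longrightarrow> sfun k n \<alpha> \<Longrightarrow> sfun m n (\<alpha> \<circ> \<beta>)"
  unfolding sfun_def by (metis atLeastAtMost_iff comp_apply le0 not_one_le_zero)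

lemma tuple_sub_comp:
  assumes "sfun m k \<beta>"
  shows "tuple_sub m \<beta> (tuple_sub k \<alpha> xs) = tuple_sub m (\<alpha> \<circ> \<beta>) xs"
proof (rule nth_equalityI)
  fix j assume "j < length (tuple_sub m \<beta> (tuple_sub k \<alpha> xs))"
  then have j: "j < m" by simp
  from sfun_Suc_in_range[OF assms j] obtain i where "\<beta> (Suc j) = Suc i" "i < k"
    by (cases "\<beta> (Suc j)") auto
  then show "tuple_sub m \<beta> (tuple_sub k \<alpha> xs) ! j = tuple_sub m (\<alpha> \<circ> \<beta>) xs ! j"
    using j by (simp add: nth_tuple_sub)
qed simp

lemma sfun_cyl: "sfun k (Suc k) (cyl k)"
  unfolding sfun_def cyl_def by auto

lemma tuple_sub_cyl_snoc: "length xs = k \<Longrightarrow> tuple_sub k (cyl k) (xs @ [y]) = xs"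
  by (rule nth_equalityI) (auto simp: nth_tuple_sub cyl_def nth_append)

lemma pe_sub_closed: "pe_algebra L \<Longrightarrow> sfun m k \<alpha> \<Longrightarrow> r \<in> pe_car L m \<Longrightarrow> pe_sub L m k \<alpha> r \<in> pe_car L k"
  and pe_ex_closed: "pe_algebra L \<Longrightarrow> r \<in> pe_car L (Suc m) \<Longrightarrow> pe_ex L m r \<in> pe_car L m"
  and pe_bot_closed: "pe_algebra L \<Longrightarrow> pe_bot L n \<in> pe_car L n"
  and pe_top_closed: "pe_algebra L \<Longrightarrow> pe_top L n \<in> pe_car L n"
  and pe_join_closed: "pe_algebra L \<Longrightarrow> x \<in> pe_car L n \<Longrightarrow> y \<in> pe_car L n \<Longrightarrow> pe_join L n x y \<in> pe_car L n"
  and pe_meet_closed: "pe_algebra L \<Longrightarrow> x \<in> pe_car L n \<Longrightarrow> y \<in> pe_car L n \<Longrightarrow> pe_meet L n x y \<in> pe_car L n"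
  unfolding pe_algebra_def by blast+

context
  fixes L :: "'a pe_alg" and n :: nat
  assumes lat: "ax1 L"
begin

lemma pe_join_commute: "x \<in> pe_car L n \<Longrightarrow> y \<in> pe_car L n \<Longrightarrow> pe_join L n x y = pe_join L n y x"
  and pe_meet_commute: "x \<in> pe_car L n \<Longrightarrow> y \<in> pe_car L n \<Longrightarrow> pe_meet L n x y = pe_meet L n y x"
  and pe_join_absorb: "x \<in> pe_car L n \<Longrightarrow> y \<in> pe_car L n \<Longrightarrow> pe_join L n x (pe_meet L n x y) = x"
  and pe_meet_absorb: "x \<in> pe_car L n \<Longrightarrow> y \<in> pe_car L n \<Longrightarrow> pe_meet L n x (pe_join L n x y) = x"
  and pe_join_bot: "x \<in> pe_car L n \<Longrightarrow> pe_join L n x (pe_bot L n) = x"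
  and pe_meet_top: "x \<in> pe_car L n \<Longrightarrow> pe_meet L n x (pe_top L n) = x"
  using lat unfolding ax1_def by blast+

lemma pe_meet_assoc:
  "x \<in> pe_car L n \<Longrightarrow> y \<in> pe_car L n \<Longrightarrow> z \<in> pe_car L n \<Longrightarrow>
    pe_meet L n x (pe_meet L n y z) = pe_meet L n (pe_meet L n x y) z"
  using lat unfolding ax1_def by blast

lemma pe_le_join_left: "x \<in> pe_car L n \<Longrightarrow> y \<in> pe_car L n \<Longrightarrow> pe_le L n x (pe_join L n x y)"
  unfolding pe_le_def by (simp add: pe_meet_absorb)

lemma pe_le_join_right: "x \<in> pe_car L n \<Longrightarrow> y \<in> pe_car L n \<Longrightarrow> pe_le L n y (pe_join L n x y)"
  by (metis pe_le_join_left pe_join_commute)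

lemma pe_le_top: "x \<in> pe_car L n \<Longrightarrow> pe_le L n x (pe_top L n)"
  unfolding pe_le_def by (simp add: pe_meet_top)

context
  assumes alg: "pe_algebra L"
begin

lemma pe_meet_idem: "x \<in> pe_car L n \<Longrightarrow> pe_meet L n x x = x"
  using pe_meet_absorb[of x "pe_meet L n x (pe_top L n)"]
  by (simp add: pe_join_absorb pe_meet_closed[OF alg] pe_top_closed[OF alg])

lemma pe_le_meet_left:
  assumes x: "x \<in> pe_car L n" and y: "y \<in> pe_car L n"
  shows "pe_le L n (pe_meet L n x y) x"
proof -
  have "pe_meet L n (pe_meet L n x y) x = pe_meet L n (pe_meet L n x x) y"
    by (metis pe_meet_assoc pe_meet_commute x y)
  then show ?thesis unfolding pe_le_def by (simp add: pe_meet_idem x)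
qed

lemma pe_le_meet_right: "x \<in> pe_car L n \<Longrightarrow> y \<in> pe_car L n \<Longrightarrow> pe_le L n (pe_meet L n x y) y"
  by (metis pe_le_meet_left pe_meet_commute)

lemma pe_le_bot: "y \<in> pe_car L n \<Longrightarrow> pe_le L n (pe_bot L n) y"
  by (metis pe_bot_closed[OF alg] pe_join_bot pe_join_commute pe_le_join_left)

end

end

lemma prime_filter_upclosed:
  "prime_filter L n F \<Longrightarrow> x \<in> F \<Longrightarrow> y \<in> pe_car L n \<Longrightarrow> pe_le L n x y \<Longrightarrow> y \<in> F"
  unfolding prime_filter_def by blast

context
  fixes L :: "'a pe_alg" and n :: nat and F :: "'a set"
  assumes lat: "ax1 L" and alg: "pe_algebra L" and F: "prime_filter L n F"
begin

lemma prime_filter_top: "pe_top L n \<in> F"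
  using F pe_le_top[OF lat] pe_top_closed[OF alg] prime_filter_upclosed[OF F]
  unfolding prime_filter_def by blast

lemma prime_filter_bot: "pe_bot L n \<notin> F"
proof
  assume "pe_bot L n \<in> F"
  then have "pe_car L n \<subseteq> F" using prime_filter_upclosed[OF F] pe_le_bot[OF lat alg] by blast
  then show False using F unfolding prime_filter_def by blast
qed

lemma prime_filter_join_iff:
  "x \<in> pe_car L n \<Longrightarrow> y \<in> pe_car L n \<Longrightarrow> pe_join L n x y \<in> F \<longleftrightarrow> x \<in> F \<or> y \<in> F"
  using F prime_filter_upclosed[OF F] pe_join_closed[OF alg] pe_le_join_left[OF lat]
    pe_le_join_right[OF lat]
  unfolding prime_filter_def by metis

lemma prime_filter_meet_iff:
  "x \<in> pe_car L n \<Longrightarrow> y \<in> pe_car L n \<Longrightarrow> pe_meet L n x y \<in> F \<longleftrightarrow> x \<in> F \<and> y \<in> F"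
  using F prime_filter_upclosed[OF F] pe_le_meet_left[OF lat alg] pe_le_meet_right[OF lat alg]
  unfolding prime_filter_def by metis

end

context
  fixes L :: "'a pe_alg"
  assumes subst: "ax2 L"
begin

lemma pe_sub_bot: "sfun m k \<alpha> \<Longrightarrow> pe_sub L m k \<alpha> (pe_bot L m) = pe_bot L k"
  and pe_sub_top: "sfun m k \<alpha> \<Longrightarrow> pe_sub L m k \<alpha> (pe_top L m) = pe_top L k"
  using subst unfolding ax2_def by blast+

lemma pe_sub_join:
  "sfun m k \<alpha> \<Longrightarrow> x \<in> pe_car L m \<Longrightarrow> y \<in> pe_car L m \<Longrightarrow>
    pe_sub L m k \<alpha> (pe_join L m x y) = pe_join L k (pe_sub L m k \<alpha> x) (pe_sub L m k \<alpha> y)"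
  and pe_sub_meet:
  "sfun m k \<alpha> \<Longrightarrow> x \<in> pe_car L m \<Longrightarrow> y \<in> pe_car L m \<Longrightarrow>
    pe_sub L m k \<alpha> (pe_meet L m x y) = pe_meet L k (pe_sub L m k \<alpha> x) (pe_sub L m k \<alpha> y)"
  using subst unfolding ax2_def by blast+

lemma pe_sub_mono:
  "sfun m k \<alpha> \<Longrightarrow> x \<in> pe_car L m \<Longrightarrow> y \<in> pe_car L m \<Longrightarrow> pe_le L m x y \<Longrightarrow>
    pe_le L k (pe_sub L m k \<alpha> x) (pe_sub L m k \<alpha> y)"
  unfolding pe_le_def by (metis pe_sub_meet)

end

lemma pe_sub_comp:
  "ax3 L \<Longrightarrow> sfun k n \<alpha> \<Longrightarrow> sfun n m \<beta> \<Longrightarrow> r \<in> pe_car L k \<Longrightarrow>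
    pe_sub L n m \<beta> (pe_sub L k n \<alpha> r) = pe_sub L k m (\<beta> \<circ> \<alpha>) r"
  unfolding ax3_def by simp

lemma pe_le_cyl_ex:
  "ax8 L \<Longrightarrow> r \<in> pe_car L (Suc n) \<Longrightarrow> pe_le L (Suc n) r (pe_sub L n (Suc n) (cyl n) (pe_ex L n r))"
  unfolding ax8_def by blast

lemma mem_phi_of_iff:
  assumes inj: "inj_on Fs {1..n}" and \<alpha>: "sfun k n \<alpha>"
  shows "generic_tuple Fs n k \<alpha> \<in> phi_of L n F Fs k r \<longleftrightarrow> pe_sub L k n \<alpha> r \<in> F"
proof
  assume "generic_tuple Fs n k \<alpha> \<in> phi_of L n F Fs k r"
  then obtain \<beta> where eq: "generic_tuple Fs n k \<alpha> = generic_tuple Fs n k \<beta>" and \<beta>: "sfun k n \<beta>"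
    and "pe_sub L k n \<beta> r \<in> F"
    unfolding phi_of_def mem_Collect_eq by blast
  moreover have "\<alpha> = \<beta>" using eq generic_tuple_inject[OF inj \<alpha> \<beta>] by blast
  ultimately show "pe_sub L k n \<alpha> r \<in> F" by simp
qed (use \<alpha> in \<open>unfold phi_of_def, blast\<close>)

lemma phi_of_subset_tuples: "phi_of L n F Fs k r \<subseteq> tuples (Fs ` {1..n}) k"
  unfolding phi_of_def using generic_tuple_in_tuples by blast

lemma phi_of_eqI:
  assumes inj: "inj_on Fs {1..n}" and B: "B \<subseteq> tuples (Fs ` {1..n}) k"
    and mem: "\<And>\<alpha>. sfun k n \<alpha> \<Longrightarrow> pe_sub L k n \<alpha> r \<in> F \<longleftrightarrow> generic_tuple Fs n k \<alpha> \<in> B"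
  shows "phi_of L n F Fs k r = B"
proof (rule set_eqI)
  fix xs
  show "xs \<in> phi_of L n F Fs k r \<longleftrightarrow> xs \<in> B"
  proof (cases "xs \<in> tuples (Fs ` {1..n}) k")
    case True
    then obtain \<alpha> where \<alpha>: "sfun k n \<alpha>" and xs: "xs = generic_tuple Fs n k \<alpha>"
      by (rule tuples_obtain_generic_tuple)
    show ?thesis unfolding xs mem_phi_of_iff[OF inj \<alpha>] by (rule mem[OF \<alpha>])
  next
    case False
    then show ?thesis using B phi_of_subset_tuples[of L n F Fs k r] by blast
  qed
qed

lemma phi_of_sub:
  assumes "ax3 L" "inj_on Fs {1..n}" "sfun m k \<beta>" "r \<in> pe_car L m"
  shows "phi_of L n F Fs k (pe_sub L m k \<beta> r) = rel_sub (Fs ` {1..n}) m k \<beta> (phi_of L n F Fs m r)"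
proof (rule phi_of_eqI[OF assms(2)])
  fix \<alpha> assume \<alpha>: "sfun k n \<alpha>"
  have "pe_sub L k n \<alpha> (pe_sub L m k \<beta> r) \<in> F \<longleftrightarrow> pe_sub L m n (\<alpha> \<circ> \<beta>) r \<in> F"
    by (simp add: pe_sub_comp[OF assms(1,3) \<alpha> assms(4)])
  also have "\<dots> \<longleftrightarrow> tuple_sub m \<beta> (generic_tuple Fs n k \<alpha>) \<in> phi_of L n F Fs m r"
    unfolding tuple_sub_comp[OF assms(3)] by (rule mem_phi_of_iff[OF assms(2) sfun_comp[OF assms(3) \<alpha>], symmetric])
  also have "\<dots> \<longleftrightarrow> generic_tuple Fs n k \<alpha> \<in> rel_sub (Fs ` {1..n}) m k \<beta> (phi_of L n F Fs m r)"
    unfolding rel_sub_def using generic_tuple_in_tuples[OF \<alpha>] by blast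
  finally show "pe_sub L k n \<alpha> (pe_sub L m k \<beta> r) \<in> F \<longleftrightarrow>
      generic_tuple Fs n k \<alpha> \<in> rel_sub (Fs ` {1..n}) m k \<beta> (phi_of L n F Fs m r)" .
qed (unfold rel_sub_def, blast)

context
  fixes L :: "'a pe_alg" and n :: nat and F :: "'a set" and Fs :: "nat \<Rightarrow> 'w"
  assumes alg: "pe_algebra L" and lat: "ax1 L" and subst: "ax2 L"
    and F: "prime_filter L n F" and inj: "inj_on Fs {1..n}"
begin

lemma phi_of_bot: "phi_of L n F Fs k (pe_bot L k) = {}"
  by (rule phi_of_eqI[OF inj])
    (simp_all add: pe_sub_bot[OF subst] prime_filter_bot[OF lat alg F])

lemma phi_of_top: "phi_of L n F Fs k (pe_top L k) = tuples (Fs ` {1..n}) k"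
proof (rule phi_of_eqI[OF inj])
  fix \<alpha> assume \<alpha>: "sfun k n \<alpha>"
  show "pe_sub L k n \<alpha> (pe_top L k) \<in> F \<longleftrightarrow> generic_tuple Fs n k \<alpha> \<in> tuples (Fs ` {1..n}) k"
    unfolding pe_sub_top[OF subst \<alpha>]
    using prime_filter_top[OF lat alg F] generic_tuple_in_tuples[OF \<alpha>] by blast
qed simp

lemma phi_of_join:
  assumes x: "x \<in> pe_car L k" and y: "y \<in> pe_car L k"
  shows "phi_of L n F Fs k (pe_join L k x y) = phi_of L n F Fs k x \<union> phi_of L n F Fs k y"
proof (rule phi_of_eqI[OF inj])
  fix \<alpha> assume \<alpha>: "sfun k n \<alpha>"
  show "pe_sub L k n \<alpha> (pe_join L k x y) \<in> F \<longleftrightarrow>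
      generic_tuple Fs n k \<alpha> \<in> phi_of L n F Fs k x \<union> phi_of L n F Fs k y"
    unfolding Un_iff mem_phi_of_iff[OF inj \<alpha>] pe_sub_join[OF subst \<alpha> x y]
    by (rule prime_filter_join_iff[OF lat alg F pe_sub_closed[OF alg \<alpha> x] pe_sub_closed[OF alg \<alpha> y]])
qed (intro Un_least phi_of_subset_tuples)

lemma phi_of_meet:
  assumes x: "x \<in> pe_car L k" and y: "y \<in> pe_car L k"
  shows "phi_of L n F Fs k (pe_meet L k x y) = phi_of L n F Fs k x \<inter> phi_of L n F Fs k y"
proof (rule phi_of_eqI[OF inj])
  fix \<alpha> assume \<alpha>: "sfun k n \<alpha>"
  show "pe_sub L k n \<alpha> (pe_meet L k x y) \<in> F \<longleftrightarrow>
      generic_tuple Fs n k \<alpha> \<in> phi_of L n F Fs k x \<inter> phi_of L n F Fs k y"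
    unfolding Int_iff mem_phi_of_iff[OF inj \<alpha>] pe_sub_meet[OF subst \<alpha> x y]
    by (rule prime_filter_meet_iff[OF lat alg F pe_sub_closed[OF alg \<alpha> x] pe_sub_closed[OF alg \<alpha> y]])
qed (rule le_infI1, rule phi_of_subset_tuples)

lemma rel_ex_phi_of_subset:
  assumes comp: "ax3 L" and ex_ax: "ax8 L" and r: "r \<in> pe_car L (Suc k)"
  shows "rel_ex (Fs ` {1..n}) k (phi_of L n F Fs (Suc k) r) \<subseteq> phi_of L n F Fs k (pe_ex L k r)"
proof
  fix xs assume "xs \<in> rel_ex (Fs ` {1..n}) k (phi_of L n F Fs (Suc k) r)"
  then obtain y where xs: "length xs = k" and "xs @ [y] \<in> phi_of L n F Fs (Suc k) r"
    unfolding rel_ex_def tuples_def by blast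
  then obtain \<gamma> where \<gamma>: "sfun (Suc k) n \<gamma>"
    and xy: "xs @ [y] = generic_tuple Fs n (Suc k) \<gamma>" and r_in: "pe_sub L (Suc k) n \<gamma> r \<in> F"
    unfolding phi_of_def by blast
  let ?c = "pe_sub L k (Suc k) (cyl k) (pe_ex L k r)"
  have ex: "pe_ex L k r \<in> pe_car L k" by (rule pe_ex_closed[OF alg r])
  have c: "?c \<in> pe_car L (Suc k)" by (rule pe_sub_closed[OF alg sfun_cyl ex])
  have "pe_le L n (pe_sub L (Suc k) n \<gamma> r) (pe_sub L (Suc k) n \<gamma> ?c)"
    by (rule pe_sub_mono[OF subst \<gamma> r c pe_le_cyl_ex[OF ex_ax r]])
  then have "pe_sub L (Suc k) n \<gamma> ?c \<in> F"
    by (rule prime_filter_upclosed[OF F r_in pe_sub_closed[OF alg \<gamma> c]])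
  moreover have "pe_sub L (Suc k) n \<gamma> ?c = pe_sub L k n (\<gamma> \<circ> cyl k) (pe_ex L k r)"
    by (rule pe_sub_comp[OF comp sfun_cyl \<gamma> ex])
  ultimately have "pe_sub L k n (\<gamma> \<circ> cyl k) (pe_ex L k r) \<in> F" by simp
  moreover have "xs = generic_tuple Fs n k (\<gamma> \<circ> cyl k)"
    using tuple_sub_cyl_snoc[OF xs, of y] by (simp add: xy tuple_sub_comp[OF sfun_cyl])
  ultimately show "xs \<in> phi_of L n F Fs k (pe_ex L k r)"
    by (simp only: mem_phi_of_iff[OF inj sfun_comp[OF sfun_cyl \<gamma>]])
qed

end

theorem lemma4p8:
  fixes L :: "'a pe_alg" and n :: nat and F :: "'a set" and Fs :: "nat \<Rightarrow> 'w"
  assumes "pe_algebra L" and "ax1 L" and "ax2 L" and "ax3 L" and "ax8 L"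
    and "prime_filter L n F"
    and "inj_on Fs {1..n}"
  shows "almost_morphism L (Fs ` {1..n}) (phi_of L n F Fs)"
  unfolding almost_morphism_def
  by (intro conjI allI ballI impI phi_of_subset_tuples phi_of_sub[OF assms(4,7)]
      phi_of_bot[OF assms(1-3,6,7)] phi_of_top[OF assms(1-3,6,7)]
      phi_of_join[OF assms(1-3,6,7)] phi_of_meet[OF assms(1-3,6,7)]
      rel_ex_phi_of_subset[OF assms(1-3,6,7,4,5)])

end
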